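(* $E_{FTP}$ is sound and ground-complete for bisimilarity on $T(\Sigma_{FTP})$: for all $t,t'\in T(\Sigma_{FTP})$, $E_{FTP}\vdash t=t'$ if and only if $t\sim t'$.
   Context: Fix a finite nonempty set $\mathcal A$ of actions, a finite set $\mathcal P$ of predicates, a subset $\mathcal P^I\subseteq\mathcal P$ of implicit predicates, and for each $P\in\mathcal P^I$ a set $\mathcal A_P\subseteq\mathcal A$. $\Sigma_{FTP}$ consists of a constant $\delta$, constants $\kappa_P$ ($P\in\mathcal P$), unary prefixes $a.\_$ ($a\in\mathcal A$), and binary $+$; closed terms $T(\Sigma_{FTP})$. Semantics: the least transition relation and predicate relation closed under: $a.x\xrightarrow{a}x$; $x\xrightarrow{a}x'\Rightarrow x+y\xrightarrow{a}x'$; $y\xrightarrow{a}y'\Rightarrow x+y\xrightarrow{a}y'$; $P\kappa_P$; $Px\Rightarrow P(x+y)$; $Py\Rightarrow P(x+y)$; $Px\Rightarrow P(a.x)$ for $P\in\mathcal P^I$, $a\in\mathcal A_P$. A symmetric relation $R$ on closed terms is a bisimulation if whenever $(s,t)\in R$: $s\xrightarrow{a}s'$ implies $t\xrightarrow{a}t'$ with $(s',t')\in R$ for some $t'$, and $Ps$ implies $Pt$; $\sim$ is the union of all bisimulations. $E_{FTP}$ consists of $x+y=y+x$, $(x+y)+z=x+(y+z)$, $x+x=x$, $x+\delta=x$, and $a.(x+\kappa_P)=a.(x+\kappa_P)+\kappa_P$ for $P\in\mathcal P^I$, $a\in\mathcal A_P$; $\vdash$ is derivability in equational logic. *)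

theory Defs
  imports Main
begin

text \<open>Terms over the signature Sigma_FTP, with variables (natural numbers) so that
  equational logic can be formulated; closed terms are those without variables.
  Actions are a finite type 'a (nonempty as every type), predicates a finite type 'p.\<close>

datatype ('a, 'p) tm =
    Var nat
  | Delta
  | Kappa 'p
  | Pre 'a "('a, 'p) tm"
  | Plus "('a, 'p) tm" "('a, 'p) tm"

fun closed :: "('a, 'p) tm \<Rightarrow> bool" where
  "closed (Var x) = False"
| "closed Delta = True"
| "closed (Kappa P) = True"
| "closed (Pre a t) = closed t"
| "closed (Plus t u) = (closed t \<and> closed u)"

fun subst :: "(nat \<Rightarrow> ('a, 'p) tm) \<Rightarrow> ('a, 'p) tm \<Rightarrow> ('a, 'p) tm" where
  "subst \<sigma> (Var x) = \<sigma> x"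
| "subst \<sigma> Delta = Delta"
| "subst \<sigma> (Kappa P) = Kappa P"
| "subst \<sigma> (Pre a t) = Pre a (subst \<sigma> t)"
| "subst \<sigma> (Plus t u) = Plus (subst \<sigma> t) (subst \<sigma> u)"

text \<open>Operational semantics: least transition and predicate relations.
  PI is the set of implicit predicates, AP P the set A_P.\<close>

inductive step :: "('a, 'p) tm \<Rightarrow> 'a \<Rightarrow> ('a, 'p) tm \<Rightarrow> bool" where
  step_pre: "step (Pre a x) a x"
| step_plus1: "step x a x' \<Longrightarrow> step (Plus x y) a x'"
| step_plus2: "step y a y' \<Longrightarrow> step (Plus x y) a y'"

inductive holds :: "'p set \<Rightarrow> ('p \<Rightarrow> 'a set) \<Rightarrow> 'p \<Rightarrow> ('a, 'p) tm \<Rightarrow> bool"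
  for PI :: "'p set" and AP :: "'p \<Rightarrow> 'a set" where
  holds_kappa: "holds PI AP P (Kappa P)"
| holds_plus1: "holds PI AP P x \<Longrightarrow> holds PI AP P (Plus x y)"
| holds_plus2: "holds PI AP P y \<Longrightarrow> holds PI AP P (Plus x y)"
| holds_pre: "P \<in> PI \<Longrightarrow> a \<in> AP P \<Longrightarrow> holds PI AP P x \<Longrightarrow> holds PI AP P (Pre a x)"

definition bisimulation ::
  "'p set \<Rightarrow> ('p \<Rightarrow> 'a set) \<Rightarrow> (('a, 'p) tm \<times> ('a, 'p) tm) set \<Rightarrow> bool" where
  "bisimulation PI AP R \<longleftrightarrow>
     (\<forall>(s, t) \<in> R. closed s \<and> closed t) \<and> sym R \<and>
     (\<forall>(s, t) \<in> R.
        (\<forall>a s'. step s a s' \<longrightarrow> (\<exists>t'. step t a t' \<and> (s', t') \<in> R)) \<and>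
        (\<forall>P. holds PI AP P s \<longrightarrow> holds PI AP P t))"

definition bisimilar :: "'p set \<Rightarrow> ('p \<Rightarrow> 'a set) \<Rightarrow> ('a, 'p) tm \<Rightarrow> ('a, 'p) tm \<Rightarrow> bool" where
  "bisimilar PI AP s t \<longleftrightarrow> (\<exists>R. bisimulation PI AP R \<and> (s, t) \<in> R)"

inductive_set E_FTP :: "'p set \<Rightarrow> ('p \<Rightarrow> 'a set) \<Rightarrow> (('a, 'p) tm \<times> ('a, 'p) tm) set"
  for PI :: "'p set" and AP :: "'p \<Rightarrow> 'a set" where
  ax_comm: "(Plus (Var 0) (Var 1), Plus (Var 1) (Var 0)) \<in> E_FTP PI AP"
| ax_assoc: "(Plus (Plus (Var 0) (Var 1)) (Var 2), Plus (Var 0) (Plus (Var 1) (Var 2))) \<in> E_FTP PI AP"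
| ax_idem: "(Plus (Var 0) (Var 0), Var 0) \<in> E_FTP PI AP"
| ax_delta: "(Plus (Var 0) Delta, Var 0) \<in> E_FTP PI AP"
| ax_impl: "P \<in> PI \<Longrightarrow> a \<in> AP P \<Longrightarrow>
    (Pre a (Plus (Var 0) (Kappa P)), Plus (Pre a (Plus (Var 0) (Kappa P))) (Kappa P)) \<in> E_FTP PI AP"

inductive derivable :: "'p set \<Rightarrow> ('p \<Rightarrow> 'a set) \<Rightarrow> ('a, 'p) tm \<Rightarrow> ('a, 'p) tm \<Rightarrow> bool"
  for PI :: "'p set" and AP :: "'p \<Rightarrow> 'a set" where
  der_ax: "(l, r) \<in> E_FTP PI AP \<Longrightarrow> derivable PI AP (subst \<sigma> l) (subst \<sigma> r)"
| der_refl: "derivable PI AP t t"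
| der_sym: "derivable PI AP t u \<Longrightarrow> derivable PI AP u t"
| der_trans: "derivable PI AP t u \<Longrightarrow> derivable PI AP u v \<Longrightarrow> derivable PI AP t v"
| der_pre: "derivable PI AP t u \<Longrightarrow> derivable PI AP (Pre a t) (Pre a u)"
| der_plus: "derivable PI AP t u \<Longrightarrow> derivable PI AP t' u' \<Longrightarrow>
     derivable PI AP (Plus t t') (Plus u u')"

end

theory Submission
  imports Defs
begin

text \<open>Every axiom instance, hence every derivable equation, relates terms that simulate
  each other with residuals again derivably equal; so derivable equality on closed terms is
  a bisimulation. Conversely, if every move and predicate of s is matched by t up to derivable
  equality, then t + s = t is derivable: each summand of s is absorbed into t, a predicate that
  t satisfies below a prefix being exactly what the axiom for implicit predicates provides.
  By induction on size, bisimilar s and t match each other in this sense, and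
  s = s + t = t + s = t.\<close>

lemma step_Plus_iff: "step (Plus x y) a z \<longleftrightarrow> step x a z \<or> step y a z"
  by (auto elim: step.cases intro: step.intros)

lemma step_Pre_iff: "step (Pre b x) a z \<longleftrightarrow> a = b \<and> z = x"
  by (auto elim: step.cases intro: step.intros)

lemma not_step_Delta: "\<not> step Delta a z"
  by (auto elim: step.cases)

lemma not_step_Kappa: "\<not> step (Kappa P) a z"
  by (auto elim: step.cases)

lemma holds_Plus_iff: "holds PI AP P (Plus x y) \<longleftrightarrow> holds PI AP P x \<or> holds PI AP P y"
  by (auto elim: holds.cases intro: holds.intros)

lemma holds_Pre_iff: "holds PI AP P (Pre a x) \<longleftrightarrow> P \<in> PI \<and> a \<in> AP P \<and> holds PI AP P x"
  by (auto elim: holds.cases intro: holds.intros)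

lemma not_holds_Delta: "\<not> holds PI AP P Delta"
  by (auto elim: holds.cases)

lemma holds_Kappa_iff: "holds PI AP P (Kappa Q) \<longleftrightarrow> P = Q"
  by (auto elim: holds.cases intro: holds.intros)

lemmas step_holds_simps = step_Plus_iff step_Pre_iff not_step_Delta not_step_Kappa
  holds_Plus_iff holds_Pre_iff not_holds_Delta holds_Kappa_iff

lemma step_closed: "step x a y \<Longrightarrow> closed x \<Longrightarrow> closed y"
  by (induction rule: step.induct) auto

lemma step_size_less: "step x a y \<Longrightarrow> size y < size x"
  by (induction rule: step.induct) auto

definition der_simulates :: "'p set \<Rightarrow> ('p \<Rightarrow> 'a set) \<Rightarrow> ('a, 'p) tm \<Rightarrow> ('a, 'p) tm \<Rightarrow> bool" where
  "der_simulates PI AP s t \<longleftrightarrow>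
     (\<forall>a s'. step s a s' \<longrightarrow> (\<exists>t'. step t a t' \<and> derivable PI AP s' t')) \<and>
     (\<forall>P. holds PI AP P s \<longrightarrow> holds PI AP P t)"

lemma der_simulates_refl: "der_simulates PI AP s s"
  unfolding der_simulates_def by (auto intro: der_refl)

lemma der_simulates_trans:
  "der_simulates PI AP s t \<Longrightarrow> der_simulates PI AP t u \<Longrightarrow> der_simulates PI AP s u"
  unfolding der_simulates_def by (meson der_trans)

lemma der_simulates_Pre:
  "derivable PI AP s t \<Longrightarrow> der_simulates PI AP s t \<Longrightarrow> der_simulates PI AP (Pre a s) (Pre a t)"
  unfolding der_simulates_def step_Pre_iff holds_Pre_iff by blast

lemma der_simulates_Plus:
  "der_simulates PI AP s t \<Longrightarrow> der_simulates PI AP s' t' \<Longrightarrow>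
   der_simulates PI AP (Plus s s') (Plus t t')"
  unfolding der_simulates_def step_Plus_iff holds_Plus_iff by blast

lemma der_simulates_Plus_left_iff:
  "der_simulates PI AP (Plus s s') t \<longleftrightarrow> der_simulates PI AP s t \<and> der_simulates PI AP s' t"
  unfolding der_simulates_def step_Plus_iff holds_Plus_iff by blast

lemma axiom_der_simulates:
  assumes "(l, r) \<in> E_FTP PI AP"
  shows "der_simulates PI AP (subst \<sigma> l) (subst \<sigma> r) \<and> der_simulates PI AP (subst \<sigma> r) (subst \<sigma> l)"
  using assms by cases (auto simp: der_simulates_def step_holds_simps intro: der_refl)

lemma derivable_imp_der_simulates:
  "derivable PI AP s t \<Longrightarrow> der_simulates PI AP s t \<and> der_simulates PI AP t s"
proof (induction rule: derivable.induct)
  case (der_ax l r \<sigma>)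
  then show ?case by (rule axiom_der_simulates)
next
  case (der_pre t u a)
  then show ?case by (blast intro: der_simulates_Pre der_sym)
qed (auto intro: der_simulates_refl der_simulates_trans der_simulates_Plus)

lemma bisimulation_derivable:
  "bisimulation PI AP {(s, t). closed s \<and> closed t \<and> derivable PI AP s t}"
  unfolding bisimulation_def
proof (intro conjI)
  show "sym {(s, t). closed s \<and> closed t \<and> derivable PI AP s t}"
    by (auto intro: symI der_sym)
  show "\<forall>(s, t) \<in> {(s, t). closed s \<and> closed t \<and> derivable PI AP s t}.
     (\<forall>a s'. step s a s' \<longrightarrow>
        (\<exists>t'. step t a t' \<and> (s', t') \<in> {(s, t). closed s \<and> closed t \<and> derivable PI AP s t})) \<and>
     (\<forall>P. holds PI AP P s \<longrightarrow> holds PI AP P t)"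
    using derivable_imp_der_simulates unfolding der_simulates_def by (blast intro: step_closed)
qed auto

lemma derivable_imp_bisimilar:
  "closed s \<Longrightarrow> closed t \<Longrightarrow> derivable PI AP s t \<Longrightarrow> bisimilar PI AP s t"
  unfolding bisimilar_def using bisimulation_derivable by blast

lemmas der_trans_calc [trans] = der_trans

lemma der_Plus_left: "derivable PI AP t u \<Longrightarrow> derivable PI AP (Plus t v) (Plus u v)"
  by (rule der_plus[OF _ der_refl])

lemma der_Plus_right: "derivable PI AP t u \<Longrightarrow> derivable PI AP (Plus v t) (Plus v u)"
  by (rule der_plus[OF der_refl])

lemma der_Plus_comm: "derivable PI AP (Plus x y) (Plus y x)"
  using der_ax[OF ax_comm, of PI AP "\<lambda>n. if n = 0 then x else y"] by simp

lemma der_Plus_assoc: "derivable PI AP (Plus (Plus x y) z) (Plus x (Plus y z))"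
  using der_ax[OF ax_assoc, of PI AP "\<lambda>n. if n = 0 then x else if n = 1 then y else z"] by simp

lemma der_Plus_idem: "derivable PI AP (Plus x x) x"
  using der_ax[OF ax_idem, of PI AP "\<lambda>n. x"] by simp

lemma der_Plus_Delta: "derivable PI AP (Plus x Delta) x"
  using der_ax[OF ax_delta, of PI AP "\<lambda>n. x"] by simp

lemma der_Pre_Kappa:
  "P \<in> PI \<Longrightarrow> a \<in> AP P \<Longrightarrow>
   derivable PI AP (Pre a (Plus x (Kappa P))) (Plus (Pre a (Plus x (Kappa P))) (Kappa P))"
  using der_ax[OF ax_impl, of P PI a AP "\<lambda>n. x"] by simp

lemma der_absorb_Plus1:
  assumes "derivable PI AP x (Plus x z)"
  shows "derivable PI AP (Plus x y) (Plus (Plus x y) z)"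
proof -
  have "derivable PI AP (Plus x y) (Plus (Plus x z) y)" using assms by (rule der_Plus_left)
  also have "derivable PI AP \<dots> (Plus x (Plus z y))" by (rule der_Plus_assoc)
  also have "derivable PI AP \<dots> (Plus x (Plus y z))" by (rule der_Plus_right[OF der_Plus_comm])
  also have "derivable PI AP \<dots> (Plus (Plus x y) z)" by (rule der_sym[OF der_Plus_assoc])
  finally show ?thesis .
qed

lemma der_absorb_Plus2:
  assumes "derivable PI AP y (Plus y z)"
  shows "derivable PI AP (Plus x y) (Plus (Plus x y) z)"
proof -
  have "derivable PI AP (Plus x y) (Plus x (Plus y z))" using assms by (rule der_Plus_right)
  also have "derivable PI AP \<dots> (Plus (Plus x y) z)" by (rule der_sym[OF der_Plus_assoc])
  finally show ?thesis .
qed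

lemma holds_imp_der_absorb_Kappa: "holds PI AP P t \<Longrightarrow> derivable PI AP t (Plus t (Kappa P))"
proof (induction rule: holds.induct)
  case (holds_kappa P)
  then show ?case by (rule der_sym[OF der_Plus_idem])
next
  case (holds_pre P a x)
  have "derivable PI AP (Pre a x) (Pre a (Plus x (Kappa P)))"
    using holds_pre.IH by (rule der_pre)
  also have "derivable PI AP \<dots> (Plus (Pre a (Plus x (Kappa P))) (Kappa P))"
    using holds_pre.hyps(1,2) by (rule der_Pre_Kappa)
  also have "derivable PI AP \<dots> (Plus (Pre a x) (Kappa P))"
    by (rule der_Plus_left[OF der_pre[OF der_sym[OF holds_pre.IH]]])
  finally show ?case .
qed (auto intro: der_absorb_Plus1 der_absorb_Plus2)

lemma step_imp_der_absorb_Pre: "step t a t' \<Longrightarrow> derivable PI AP t (Plus t (Pre a t'))"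
proof (induction rule: step.induct)
  case (step_pre a x)
  then show ?case by (rule der_sym[OF der_Plus_idem])
qed (auto intro: der_absorb_Plus1 der_absorb_Plus2)

lemma der_simulates_imp_der_absorb:
  "closed s \<Longrightarrow> der_simulates PI AP s t \<Longrightarrow> derivable PI AP (Plus t s) t"
proof (induction s)
  case Delta
  show ?case by (rule der_Plus_Delta)
next
  case (Kappa P)
  then have "holds PI AP P t"
    unfolding der_simulates_def by (blast intro: holds.holds_kappa)
  then show ?case by (rule der_sym[OF holds_imp_der_absorb_Kappa])
next
  case (Pre a s)
  then obtain t' where t': "step t a t'" "derivable PI AP s t'"
    unfolding der_simulates_def by (blast intro: step.step_pre)
  have "derivable PI AP (Plus t (Pre a s)) (Plus t (Pre a t'))"
    by (rule der_Plus_right[OF der_pre[OF t'(2)]])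
  also have "derivable PI AP \<dots> t" by (rule der_sym[OF step_imp_der_absorb_Pre[OF t'(1)]])
  finally show ?case .
next
  case (Plus s1 s2)
  then have IH1: "derivable PI AP (Plus t s1) t" and IH2: "derivable PI AP (Plus t s2) t"
    by (simp_all add: der_simulates_Plus_left_iff)
  have "derivable PI AP (Plus t (Plus s1 s2)) (Plus (Plus t s1) s2)"
    by (rule der_sym[OF der_Plus_assoc])
  also have "derivable PI AP \<dots> (Plus t s2)" by (rule der_Plus_left[OF IH1])
  also have "derivable PI AP \<dots> t" by (rule IH2)
  finally show ?case .
qed simp

lemma bisimilar_closed: "bisimilar PI AP s t \<Longrightarrow> closed s \<and> closed t"
  unfolding bisimilar_def bisimulation_def by blast

lemma bisimilar_sym: "bisimilar PI AP s t \<Longrightarrow> bisimilar PI AP t s"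
  unfolding bisimilar_def bisimulation_def by (blast dest: symD)

lemma bisimilar_holds: "bisimilar PI AP s t \<Longrightarrow> holds PI AP P s \<Longrightarrow> holds PI AP P t"
  unfolding bisimilar_def bisimulation_def by blast

lemma bisimilar_step:
  "bisimilar PI AP s t \<Longrightarrow> step s a s' \<Longrightarrow> \<exists>t'. step t a t' \<and> bisimilar PI AP s' t'"
  unfolding bisimilar_def bisimulation_def by blast

lemma bisimilar_imp_der_simulates:
  assumes "bisimilar PI AP s t"
    and "\<And>s' t'. size s' < size s \<Longrightarrow> size t' < size t \<Longrightarrow> bisimilar PI AP s' t' \<Longrightarrow>
      derivable PI AP s' t'"
  shows "der_simulates PI AP s t"
  unfolding der_simulates_def
  using assms bisimilar_step bisimilar_holds step_size_less by meson

lemma bisimilar_imp_derivable: "bisimilar PI AP s t \<Longrightarrow> derivable PI AP s t"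
proof (induction "size s + size t" arbitrary: s t rule: less_induct)
  case less
  have "der_simulates PI AP s t"
    using less by (intro bisimilar_imp_der_simulates) auto
  then have ts: "derivable PI AP (Plus t s) t"
    using bisimilar_closed[OF less.prems] by (blast intro: der_simulates_imp_der_absorb)
  have "der_simulates PI AP t s"
    using less bisimilar_sym by (intro bisimilar_imp_der_simulates) auto
  then have st: "derivable PI AP (Plus s t) s"
    using bisimilar_closed[OF less.prems] by (blast intro: der_simulates_imp_der_absorb)
  have "derivable PI AP s (Plus s t)" by (rule der_sym[OF st])
  also have "derivable PI AP \<dots> (Plus t s)" by (rule der_Plus_comm)
  also have "derivable PI AP \<dots> t" by (rule ts)
  finally show ?case .
qed

theorem theorem1:
  fixes PI :: "('p::finite) set" and AP :: "'p \<Rightarrow> ('a::finite) set"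
    and t t' :: "('a, 'p) tm"
  assumes "closed t" and "closed t'"
  shows "derivable PI AP t t' \<longleftrightarrow> bisimilar PI AP t t'"
  using assms derivable_imp_bisimilar bisimilar_imp_derivable by blast

end
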